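(* Let $(X,d)$ be a compact metric space and $f:X\to X$ continuous such that $f|_{CR(f)}$ has the shadowing property. Let $(x,y)\in CR(f)^2$ with $x\ne y$ and $x\sim y$. Then for every $0<\epsilon<\frac12 d(x,y)$ there is an integer $a>0$ such that $h(f,\{X\setminus \overline{B}... \})$; precisely, $h(f,\{X\setminus B_\epsilon(x), X\setminus B_\epsilon(y)\})\ge a^{-1}\log 2>0$, and consequently $(x,y)\in E(X,f)$.
   Context: $B_\epsilon(p)$ is the open $\epsilon$-ball about $p$ (so $\{X\setminus B_\epsilon(x),X\setminus B_\epsilon(y)\}$ is a closed cover; entropy relative to it is defined as for open covers via $\lim_n\frac1n\log$ of the minimal cardinality of subcovers of the joins $\bigvee_{i=0}^{n-1}f^{-i}\mathcal U$). A $\delta$-chain of $f$ is a finite sequence $(x_i)_{i=0}^k$, $k\ge1$, with $d(f(x_i),x_{i+1})\le\delta$; a $\delta$-cycle is a $\delta$-chain with $x_0=x_k$. $CR(f)$ is the set of points $x$ such that for every $\delta>0$ there is a $\delta$-cycle starting and ending at $x$. For $x,y\in CR(f)$, $x\sim y$ iff for every $\delta>0$ there are integers $m>0$, $N>0$ such that for every $n\ge N$ there are $\delta$-chains $(x_i)_{i=0}^{mn},(y_i)_{i=0}^{mn}$ in $CR(f)$ with $x_0=y_{mn}=x$, $x_{mn}=y_0=y$. Shadowing property of $g:Y\to Y$: for every $\epsilon>0$ there is $\delta>0$ such that every $\delta$-pseudo orbit $(y_i)_{i\ge 0}$ ($d(g(y_i),y_{i+1})\le\delta$) is $\epsilon$-shadowed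 by some $y\in Y$ ($d(g^i(y),y_i)\le\epsilon$ for all $i$). An entropy pair is $(x,y)$, $x\ne y$, such that for all disjoint closed neighborhoods $A\ni x$, $B\ni y$, $h(f,\{X\setminus A,X\setminus B\})>0$; $E(X,f)$ is the set of entropy pairs. *)

theory Defs
  imports "HOL-Analysis.Analysis"
begin

definition is_chain :: "('a::metric_space \<Rightarrow> 'a) \<Rightarrow> 'a set \<Rightarrow> real \<Rightarrow> nat \<Rightarrow> (nat \<Rightarrow> 'a) \<Rightarrow> bool" where
  "is_chain f S \<delta> k c \<longleftrightarrow> k \<ge> 1 \<and> (\<forall>i\<le>k. c i \<in> S) \<and>
     (\<forall>i<k. dist (f (c i)) (c (Suc i)) \<le> \<delta>)"

definition chain_recurrent_set :: "('a::metric_space \<Rightarrow> 'a) \<Rightarrow> 'a set \<Rightarrow> 'a set" where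
  "chain_recurrent_set f X = {x \<in> X. \<forall>\<delta>>0. \<exists>k c. is_chain f X \<delta> k c \<and> c 0 = x \<and> c k = x}"

definition chain_equiv :: "('a::metric_space \<Rightarrow> 'a) \<Rightarrow> 'a set \<Rightarrow> 'a \<Rightarrow> 'a \<Rightarrow> bool" where
  "chain_equiv f X x y \<longleftrightarrow> x \<in> chain_recurrent_set f X \<and> y \<in> chain_recurrent_set f X \<and>
     (\<forall>\<delta>>0. \<exists>m::nat. m > 0 \<and> (\<exists>N::nat. N > 0 \<and> (\<forall>n\<ge>N.
        (\<exists>c. is_chain f (chain_recurrent_set f X) \<delta> (m * n) c \<and> c 0 = x \<and> c (m * n) = y) \<and>
        (\<exists>c. is_chain f (chain_recurrent_set f X) \<delta> (m * n) c \<and> c 0 = y \<and> c (m * n) = x))))"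

definition has_shadowing :: "('a::metric_space \<Rightarrow> 'a) \<Rightarrow> 'a set \<Rightarrow> bool" where
  "has_shadowing g Y \<longleftrightarrow> (\<forall>\<epsilon>>0. \<exists>\<delta>>0. \<forall>ys :: nat \<Rightarrow> 'a.
     (\<forall>i. ys i \<in> Y) \<and> (\<forall>i. dist (g (ys i)) (ys (Suc i)) \<le> \<delta>) \<longrightarrow>
     (\<exists>y\<in>Y. \<forall>i. dist ((g ^^ i) y) (ys i) \<le> \<epsilon>))"

definition preim :: "('a \<Rightarrow> 'a) \<Rightarrow> 'a set \<Rightarrow> nat \<Rightarrow> 'a set \<Rightarrow> 'a set" where
  "preim f X i A = {z \<in> X. (f ^^ i) z \<in> A}"

definition join_cover :: "('a \<Rightarrow> 'a) \<Rightarrow> 'a set \<Rightarrow> 'a set set \<Rightarrow> nat \<Rightarrow> 'a set set" where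
  "join_cover f X U n = {X \<inter> (\<Inter>i<n. preim f X i (s i)) | s. \<forall>i<n. s i \<in> U}"

definition cover_num :: "'a set \<Rightarrow> 'a set set \<Rightarrow> nat" where
  "cover_num X V = (LEAST k. \<exists>W. W \<subseteq> V \<and> finite W \<and> card W = k \<and> X \<subseteq> \<Union>W)"

definition cover_entropy :: "('a \<Rightarrow> 'a) \<Rightarrow> 'a set \<Rightarrow> 'a set set \<Rightarrow> real" where
  "cover_entropy f X U = lim (\<lambda>n. ln (real (cover_num X (join_cover f X U n))) / real n)"

definition entropy_pair :: "('a::metric_space \<Rightarrow> 'a) \<Rightarrow> 'a set \<Rightarrow> 'a \<Rightarrow> 'a \<Rightarrow> bool" where
  "entropy_pair f X x y \<longleftrightarrow> x \<in> X \<and> y \<in> X \<and> x \<noteq> y \<and>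
     (\<forall>A B. closed A \<and> closed B \<and> A \<subseteq> X \<and> B \<subseteq> X \<and> A \<inter> B = {} \<and>
        (\<exists>U. open U \<and> x \<in> U \<and> U \<inter> X \<subseteq> A) \<and> (\<exists>V. open V \<and> y \<in> V \<and> V \<inter> X \<subseteq> B)
        \<longrightarrow> cover_entropy f X {X - A, X - B} > 0)"

end

theory Submission
  imports Defs
begin

text \<open>
  Chain equivalence of \<open>x\<close> and \<open>y\<close> yields, for one common length \<open>L\<close>, \<open>\<delta>\<close>-chains in \<open>CR(f)\<close>
  of length \<open>L\<close> from each of \<open>x, y\<close> to each of \<open>x, y\<close>. Concatenating them along an arbitrary
  0-1 word gives a \<open>\<delta>\<close>-pseudo orbit, which shadowing turns into a true orbit that is \<open>\<epsilon>\<close>-close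
  to \<open>y\<close> or to \<open>x\<close> at the times \<open>j L\<close>, as the word prescribes. For a cover \<open>{P, Q}\<close> with
  \<open>P\<close> missing the \<open>\<epsilon>\<close>-ball about \<open>x\<close> and \<open>Q\<close> the one about \<open>y\<close>, orbits of different words
  never share a member of the join up to time \<open>k L\<close>, so that join needs \<open>2^k\<close> members and the
  entropy of the cover is at least \<open>ln 2 / L\<close>.
\<close>

lemma subadditive_mult_le:
  fixes a :: "nat \<Rightarrow> real"
  assumes sub: "\<And>m n. a (m + n) \<le> a m + a n"
  shows "a (q * k + r) \<le> real q * a k + a r"
proof (induction q)
  case (Suc q)
  have "a (Suc q * k + r) = a (k + (q * k + r))" by (simp add: algebra_simps)
  also have "\<dots> \<le> a k + a (q * k + r)" by (rule sub)
  also have "\<dots> \<le> a k + (real q * a k + a r)" using Suc by simp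
  finally show ?case by (simp add: algebra_simps)
qed simp

lemma subadditive_div_le:
  fixes a :: "nat \<Rightarrow> real"
  assumes sub: "\<And>m n. a (m + n) \<le> a m + a n" and nonneg: "\<And>n. a n \<ge> 0"
    and "k > 0" "n > 0"
  shows "a n / real n \<le> a k / real k + (\<Sum>r<k. a r) / real n"
proof -
  define q r where "q = n div k" and "r = n mod k"
  have n: "n = q * k + r" unfolding q_def r_def by simp
  have "r < k" unfolding r_def using \<open>k > 0\<close> by simp
  then have "a r \<le> (\<Sum>r<k. a r)" using nonneg by (intro member_le_sum) auto
  then have "a n \<le> real q * a k + (\<Sum>r<k. a r)"
    using subadditive_mult_le[OF sub, of q k r] n by simp
  moreover have "real q * a k \<le> real n * (a k / real k)"
  proof -
    have "real q * real k \<le> real n" using n by (metis le_add1 of_nat_le_iff of_nat_mult)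
    then have "real k * (real q * a k) \<le> real n * a k"
      using nonneg[of k] by (metis mult.assoc mult.commute mult_right_mono)
    then show ?thesis using \<open>k > 0\<close> by (simp add: field_simps)
  qed
  ultimately have "a n \<le> real n * (a k / real k) + (\<Sum>r<k. a r)" by linarith
  then show ?thesis using \<open>n > 0\<close> by (simp add: field_simps)
qed

lemma subadditive_convergent_div:
  fixes a :: "nat \<Rightarrow> real"
  assumes sub: "\<And>m n. a (m + n) \<le> a m + a n" and nonneg: "\<And>n. a n \<ge> 0"
  shows "convergent (\<lambda>n. a n / real n)"
proof -
  define S where "S = (\<lambda>n. a n / real n) ` {1..}"
  have bdd: "bdd_below S" unfolding S_def by (rule bdd_belowI[of _ 0]) (auto simp: nonneg)
  have "(\<lambda>n. a n / real n) \<longlonglongrightarrow> Inf S"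
  proof (rule order_tendstoI)
    fix l assume l: "l < Inf S"
    have low: "Inf S \<le> a n / real n" if "n \<ge> 1" for n
      using bdd that unfolding S_def by (auto intro!: cInf_lower)
    show "\<forall>\<^sub>F n in sequentially. l < a n / real n"
      using eventually_ge_at_top[of 1] by (rule eventually_mono) (use l low in \<open>auto intro: less_le_trans\<close>)
  next
    fix u assume "Inf S < u"
    then obtain k where k: "k \<ge> 1" "a k / real k < u"
      using cInf_lessD[of S u] unfolding S_def by auto
    have "(\<lambda>n. (\<Sum>r<k. a r) / real n) \<longlonglongrightarrow> 0" by (rule lim_const_over_n)
    then have "\<forall>\<^sub>F n in sequentially. (\<Sum>r<k. a r) / real n < u - a k / real k"
      using k(2) by (intro order_tendstoD) auto
    then show "\<forall>\<^sub>F n in sequentially. a n / real n < u"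
      using eventually_ge_at_top[of 1]
    proof eventually_elim
      case (elim n)
      then show ?case using subadditive_div_le[OF sub nonneg, of k n] k by linarith
    qed
  qed
  then show ?thesis by (rule convergentI)
qed

lemma funpow_mem_if_image_subset: "f ` X \<subseteq> X \<Longrightarrow> z \<in> X \<Longrightarrow> (f ^^ i) z \<in> X"
  by (induction i) auto

lemma all_less_add_iff: "(\<forall>i<n + m::nat. P i) \<longleftrightarrow> (\<forall>i<n. P i) \<and> (\<forall>i<m. P (i + n))"
proof safe
  fix i assume "\<forall>i<n. P i" "\<forall>i<m. P (i + n)" "i < n + m"
  then show "P i" by (cases "i < n") (auto dest: spec[of _ "i - n"])
qed auto

lemma mem_join_cover_iff:
  "E \<in> join_cover f X U n \<longleftrightarrow> (\<exists>s. (\<forall>i<n. s i \<in> U) \<and> E = {z \<in> X. \<forall>i<n. (f ^^ i) z \<in> s i})"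
  unfolding join_cover_def preim_def by blast

lemma finite_join_cover:
  assumes "finite U"
  shows "finite (join_cover f X U n)"
proof -
  let ?E = "\<lambda>s. {z \<in> X. \<forall>i<n. (f ^^ i) z \<in> s i}"
  have "join_cover f X U n \<subseteq> ?E ` (PiE {..<n} (\<lambda>_. U))"
  proof
    fix E assume "E \<in> join_cover f X U n"
    then obtain s where s: "\<forall>i<n. s i \<in> U" "E = ?E s" unfolding mem_join_cover_iff by blast
    then have "E = ?E (restrict s {..<n})" by auto
    moreover have "restrict s {..<n} \<in> PiE {..<n} (\<lambda>_. U)" using s(1) by auto
    ultimately show "E \<in> ?E ` (PiE {..<n} (\<lambda>_. U))" by blast
  qed
  moreover have "finite (PiE {..<n} (\<lambda>_. U))" using assms by (simp add: finite_PiE)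
  ultimately show ?thesis by (meson finite_imageI finite_subset)
qed

lemma join_cover_covers:
  assumes "f ` X \<subseteq> X" "X \<subseteq> \<Union>U"
  shows "X \<subseteq> \<Union>(join_cover f X U n)"
proof
  fix z assume z: "z \<in> X"
  have "\<exists>A. A \<in> U \<and> (f ^^ i) z \<in> A" for i
    using funpow_mem_if_image_subset[OF assms(1) z, of i] assms(2) by blast
  then obtain s where s: "\<And>i. s i \<in> U" "\<And>i. (f ^^ i) z \<in> s i" by metis
  then have "{z \<in> X. \<forall>i<n. (f ^^ i) z \<in> s i} \<in> join_cover f X U n"
    unfolding mem_join_cover_iff by (intro exI[of _ s]) simp
  moreover have "z \<in> {z \<in> X. \<forall>i<n. (f ^^ i) z \<in> s i}" using z s(2) by blast
  ultimately show "z \<in> \<Union>(join_cover f X U n)" by blast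
qed

lemma join_cover_mem_common:
  assumes "E \<in> join_cover f X U n" "z1 \<in> E" "z2 \<in> E" "t < n"
  shows "\<exists>A\<in>U. (f ^^ t) z1 \<in> A \<and> (f ^^ t) z2 \<in> A"
  using assms unfolding mem_join_cover_iff by blast

lemma join_cover_append:
  assumes "f ` X \<subseteq> X" "E1 \<in> join_cover f X U n" "E2 \<in> join_cover f X U m"
  shows "{z \<in> E1. (f ^^ n) z \<in> E2} \<in> join_cover f X U (n + m)"
proof -
  obtain s1 where s1: "\<forall>i<n. s1 i \<in> U" "E1 = {z \<in> X. \<forall>i<n. (f ^^ i) z \<in> s1 i}"
    using assms(2) unfolding mem_join_cover_iff by blast
  obtain s2 where s2: "\<forall>i<m. s2 i \<in> U" "E2 = {z \<in> X. \<forall>i<m. (f ^^ i) z \<in> s2 i}"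
    using assms(3) unfolding mem_join_cover_iff by blast
  define s where "s i = (if i < n then s1 i else s2 (i - n))" for i
  have "(\<forall>i<n + m. (f ^^ i) z \<in> s i) \<longleftrightarrow>
        (\<forall>i<n. (f ^^ i) z \<in> s1 i) \<and> (\<forall>i<m. (f ^^ i) ((f ^^ n) z) \<in> s2 i)" for z
    unfolding all_less_add_iff by (simp add: s_def funpow_add)
  then have "{z \<in> E1. (f ^^ n) z \<in> E2} = {z \<in> X. \<forall>i<n + m. (f ^^ i) z \<in> s i}"
    unfolding s1(2) s2(2) using funpow_mem_if_image_subset[OF assms(1)] by blast
  moreover have "\<forall>i<n + m. s i \<in> U" using s1(1) s2(1) unfolding s_def by auto
  ultimately show ?thesis unfolding mem_join_cover_iff by blast
qed

lemma cover_num_le_card: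
  "W \<subseteq> V \<Longrightarrow> finite W \<Longrightarrow> X \<subseteq> \<Union>W \<Longrightarrow> cover_num X V \<le> card W"
  unfolding cover_num_def by (rule Least_le) blast

lemma obtain_minimal_subcover:
  assumes "finite V" "X \<subseteq> \<Union>V"
  obtains W where "W \<subseteq> V" "finite W" "card W = cover_num X V" "X \<subseteq> \<Union>W"
proof -
  have "\<exists>k W. W \<subseteq> V \<and> finite W \<and> card W = k \<and> X \<subseteq> \<Union>W" using assms by blast
  then have "\<exists>W. W \<subseteq> V \<and> finite W \<and> card W = cover_num X V \<and> X \<subseteq> \<Union>W"
    unfolding cover_num_def by (rule LeastI_ex)
  then show ?thesis using that by blast
qed

lemma cover_num_pos:
  assumes "finite V" "X \<subseteq> \<Union>V" "X \<noteq> {}"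
  shows "cover_num X V > 0"
proof -
  obtain W where "W \<subseteq> V" "finite W" "card W = cover_num X V" "X \<subseteq> \<Union>W"
    using obtain_minimal_subcover[OF assms(1,2)] .
  then show ?thesis using assms(3) by (metis Union_empty card_gt_0_iff subset_empty)
qed

lemma cover_num_join_cover_submult:
  assumes "f ` X \<subseteq> X" "finite U" "X \<subseteq> \<Union>U"
  shows "cover_num X (join_cover f X U (n + m)) \<le>
         cover_num X (join_cover f X U n) * cover_num X (join_cover f X U m)"
proof -
  let ?J = "join_cover f X U"
  have fin: "finite (?J k)" and cv: "X \<subseteq> \<Union>(?J k)" for k
    using finite_join_cover[OF assms(2)] join_cover_covers[OF assms(1,3)] by auto
  obtain W1 where W1: "W1 \<subseteq> ?J n" "finite W1" "card W1 = cover_num X (?J n)" "X \<subseteq> \<Union>W1"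
    using obtain_minimal_subcover[OF fin cv] .
  obtain W2 where W2: "W2 \<subseteq> ?J m" "finite W2" "card W2 = cover_num X (?J m)" "X \<subseteq> \<Union>W2"
    using obtain_minimal_subcover[OF fin cv] .
  define C where "C = (\<lambda>(E1, E2). {z \<in> E1. (f ^^ n) z \<in> E2})"
  have "C ` (W1 \<times> W2) \<subseteq> ?J (n + m)"
    using W1(1) W2(1) by (auto simp: C_def intro!: join_cover_append[OF assms(1)])
  moreover have "X \<subseteq> \<Union>(C ` (W1 \<times> W2))"
  proof
    fix z assume z: "z \<in> X"
    obtain E1 where "E1 \<in> W1" "z \<in> E1" using W1(4) z by blast
    moreover obtain E2 where "E2 \<in> W2" "(f ^^ n) z \<in> E2"
      using W2(4) funpow_mem_if_image_subset[OF assms(1) z] by blast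
    ultimately show "z \<in> \<Union>(C ` (W1 \<times> W2))" unfolding C_def by blast
  qed
  ultimately have "cover_num X (?J (n + m)) \<le> card (C ` (W1 \<times> W2))"
    using W1(2) W2(2) by (intro cover_num_le_card) auto
  also have "\<dots> \<le> card W1 * card W2"
    using card_image_le[of "W1 \<times> W2" C] W1(2) W2(2) by (simp add: card_cartesian_product)
  finally show ?thesis using W1(3) W2(3) by simp
qed

text \<open>\<open>cover_entropy\<close> is defined by \<open>lim\<close>, which is only meaningful because the sequence
  converges (Fekete's lemma).\<close>
lemma cover_entropy_tendsto:
  assumes "f ` X \<subseteq> X" "finite U" "X \<subseteq> \<Union>U" "X \<noteq> {}"
  shows "(\<lambda>n. ln (real (cover_num X (join_cover f X U n))) / real n) \<longlonglongrightarrow> cover_entropy f X U"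
proof -
  define N where "N n = real (cover_num X (join_cover f X U n))" for n
  have N_ge1: "N n \<ge> 1" for n
    unfolding N_def using cover_num_pos[OF finite_join_cover[OF assms(2)] join_cover_covers[OF assms(1,3)] assms(4)]
    by (simp add: Suc_le_eq)
  have "ln (N (m + n)) \<le> ln (N m) + ln (N n)" for m n
  proof -
    have "N (m + n) \<le> N m * N n"
      unfolding N_def using cover_num_join_cover_submult[OF assms(1-3)] by (metis of_nat_le_iff of_nat_mult)
    then have "ln (N (m + n)) \<le> ln (N m * N n)" using N_ge1[of "m + n"] by simp
    also have "\<dots> = ln (N m) + ln (N n)" using N_ge1[of m] N_ge1[of n] by (simp add: ln_mult)
    finally show ?thesis .
  qed
  moreover have "ln (N n) \<ge> 0" for n using N_ge1[of n] by simp
  ultimately have "convergent (\<lambda>n. ln (N n) / real n)" by (rule subadditive_convergent_div)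
  then show ?thesis unfolding cover_entropy_def N_def by (simp add: convergent_LIMSEQ_iff)
qed

lemma is_chain_append:
  assumes c: "is_chain f S \<delta> k c" and d: "is_chain f S \<delta> l d" and "c k = d 0"
  shows "is_chain f S \<delta> (k + l) (\<lambda>i. if i \<le> k then c i else d (i - k))"
  unfolding is_chain_def
proof (intro conjI allI impI)
  show "1 \<le> k + l" using c unfolding is_chain_def by simp
  show "(if i \<le> k then c i else d (i - k)) \<in> S" if "i \<le> k + l" for i
    using c d that unfolding is_chain_def by auto
  fix i assume i: "i < k + l"
  consider "Suc i \<le> k" | "i = k" | "k < i" by linarith
  then show "dist (f (if i \<le> k then c i else d (i - k)))
      (if Suc i \<le> k then c (Suc i) else d (Suc i - k)) \<le> \<delta>"
  proof cases
    case 3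
    then have "i - k < l" "Suc i - k = Suc (i - k)" using i by auto
    then show ?thesis using 3 d unfolding is_chain_def by auto
  qed (use c d \<open>c k = d 0\<close> in \<open>auto simp: is_chain_def\<close>)
qed

lemma chain_equiv_chains_same_length:
  assumes "chain_equiv f X x y" "\<delta> > 0"
  obtains L where "L > 0" "\<forall>u v. \<exists>c. is_chain f (chain_recurrent_set f X) \<delta> L c \<and>
           c 0 = (if u then y else x) \<and> c L = (if v then y else x)"
proof -
  let ?ch = "is_chain f (chain_recurrent_set f X) \<delta>"
  obtain m N where "m > 0" "N > 0" and H: "\<And>n. n \<ge> N \<Longrightarrow>
      (\<exists>c. ?ch (m * n) c \<and> c 0 = x \<and> c (m * n) = y) \<and> (\<exists>c. ?ch (m * n) c \<and> c 0 = y \<and> c (m * n) = x)"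
    using assms unfolding chain_equiv_def by meson
  obtain c1 where c1: "?ch (m * N) c1" "c1 0 = x" "c1 (m * N) = y" using H[of N] by auto
  obtain c2 where c2: "?ch (m * N) c2" "c2 0 = y" "c2 (m * N) = x" using H[of N] by auto
  obtain c3 where c3: "?ch (m * (2 * N)) c3" "c3 0 = x" "c3 (m * (2 * N)) = y" using H[of "2 * N"] by auto
  obtain c4 where c4: "?ch (m * (2 * N)) c4" "c4 0 = y" "c4 (m * (2 * N)) = x" using H[of "2 * N"] by auto
  \<comment> \<open>Chains x to y and y to x of length \<open>L\<close> come directly from \<open>n = 2 N\<close>; loops at x and at y
    of length \<open>L\<close> are two chains of length \<open>m N\<close> glued together.\<close>
  define L where "L = m * (2 * N)"
  have L: "L = m * N + m * N" "m * N < L" unfolding L_def using \<open>m > 0\<close> \<open>N > 0\<close> by auto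
  have xx: "\<exists>c. ?ch L c \<and> c 0 = x \<and> c L = x"
    using is_chain_append[OF c1(1) c2(1)] c1 c2 L
    by (intro exI[of _ "\<lambda>i. if i \<le> m * N then c1 i else c2 (i - m * N)"]) auto
  have yy: "\<exists>c. ?ch L c \<and> c 0 = y \<and> c L = y"
    using is_chain_append[OF c2(1) c1(1)] c1 c2 L
    by (intro exI[of _ "\<lambda>i. if i \<le> m * N then c2 i else c1 (i - m * N)"]) auto
  have "\<exists>c. ?ch L c \<and> c 0 = (if u then y else x) \<and> c L = (if v then y else x)" for u v
    using xx yy c3 c4 unfolding L_def by (cases u; cases v) auto
  then show ?thesis using L(2) that[of L] by simp
qed

lemma pseudo_orbit_from_chains:
  assumes "L > 0" and B: "\<And>u v. is_chain f S \<delta> L (B u v) \<and> B u v 0 = pt u \<and> B u v L = pt v"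
  shows "\<exists>p. (\<forall>i. p i \<in> S) \<and> (\<forall>i. dist (f (p i)) (p (Suc i)) \<le> \<delta>) \<and> (\<forall>j. p (j * L) = pt (w j))"
proof -
  define p where "p t = B (w (t div L)) (w (Suc (t div L))) (t mod L)" for t
  have p: "p (j * L + r) = B (w j) (w (Suc j)) r" if "r < L" for j r
    unfolding p_def using that by simp
  have "p t \<in> S" for t
    unfolding p_def using B \<open>L > 0\<close> unfolding is_chain_def by (simp add: order_less_imp_le)
  moreover have "dist (f (p t)) (p (Suc t)) \<le> \<delta>" for t
  proof -
    define j r where "j = t div L" and "r = t mod L"
    have t: "t = j * L + r" and "r < L" unfolding j_def r_def using \<open>L > 0\<close> by simp_all
    have "Suc r \<le> L" using \<open>r < L\<close> by simp
    moreover have "p (Suc t) = B (w j) (w (Suc j)) (Suc r)"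
    proof (cases "Suc r < L")
      case True then show ?thesis using p[OF True] t by simp
    next
      case False
      then have "Suc r = L" "Suc t = Suc j * L + 0" using t \<open>r < L\<close> by simp_all
      then have "p (Suc t) = pt (w (Suc j))" using p[OF \<open>L > 0\<close>, of "Suc j"] B by simp
      also have "\<dots> = B (w j) (w (Suc j)) (Suc r)"
        using B[of "w j" "w (Suc j)"] by (simp add: \<open>Suc r = L\<close>[symmetric])
      finally show ?thesis .
    qed
    ultimately show ?thesis using B[of "w j" "w (Suc j)"] p[OF \<open>r < L\<close>] t unfolding is_chain_def by simp
  qed
  moreover have "p (j * L) = pt (w j)" for j using p[OF \<open>L > 0\<close>, of j] B by simp
  ultimately show ?thesis by blast
qed

lemma shadowing_orbit_follows_word:
  assumes "has_shadowing f (chain_recurrent_set f X)" "chain_equiv f X x y" "\<epsilon> > 0"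
  obtains L where "L > 0" "\<forall>w. \<exists>z\<in>X. \<forall>j. (f ^^ (j * L)) z \<in> ball (if w j then y else x) \<epsilon>"
proof -
  let ?CR = "chain_recurrent_set f X"
  obtain \<delta> where "\<delta> > 0" and shadow: "\<forall>p. (\<forall>i. p i \<in> ?CR) \<and> (\<forall>i. dist (f (p i)) (p (Suc i)) \<le> \<delta>) \<longrightarrow>
      (\<exists>z\<in>?CR. \<forall>i. dist ((f ^^ i) z) (p i) \<le> \<epsilon> / 2)"
    using assms(1)[unfolded has_shadowing_def, rule_format, OF half_gt_zero[OF \<open>\<epsilon> > 0\<close>]] by blast
  obtain L where "L > 0" and chains: "\<forall>u v. \<exists>c. is_chain f ?CR \<delta> L c \<and>
      c 0 = (if u then y else x) \<and> c L = (if v then y else x)"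
    by (rule chain_equiv_chains_same_length[OF assms(2) \<open>\<delta> > 0\<close>])
  define B where "B u v = (SOME c. is_chain f ?CR \<delta> L c \<and>
      c 0 = (if u then y else x) \<and> c L = (if v then y else x))" for u v
  have B: "is_chain f ?CR \<delta> L (B u v) \<and> B u v 0 = (if u then y else x) \<and> B u v L = (if v then y else x)"
    for u v unfolding B_def by (rule someI_ex[OF chains[rule_format]])
  have "\<exists>z\<in>X. \<forall>j. (f ^^ (j * L)) z \<in> ball (if w j then y else x) \<epsilon>" for w
  proof -
    obtain p where p: "\<forall>i. p i \<in> ?CR" "\<forall>i. dist (f (p i)) (p (Suc i)) \<le> \<delta>"
        "\<forall>j. p (j * L) = (if w j then y else x)"
      using pseudo_orbit_from_chains[where pt = "\<lambda>u. if u then y else x" and w = w, OF \<open>L > 0\<close> B] by blast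
    obtain z where z: "z \<in> ?CR" "\<forall>i. dist ((f ^^ i) z) (p i) \<le> \<epsilon> / 2"
      using shadow p(1,2) by blast
    have "(f ^^ (j * L)) z \<in> ball (if w j then y else x) \<epsilon>" for j
    proof -
      have "dist ((f ^^ (j * L)) z) (if w j then y else x) \<le> \<epsilon> / 2" using z(2) p(3) by metis
      then show ?thesis using \<open>\<epsilon> > 0\<close> by (simp add: dist_commute)
    qed
    moreover have "z \<in> X" using z(1) unfolding chain_recurrent_set_def by blast
    ultimately show ?thesis by blast
  qed
  then show ?thesis using that \<open>L > 0\<close> by blast
qed

text \<open>Two points following different words lie at some time \<open>j * L < n\<close> in the disjoint
  balls about \<open>x\<close> and \<open>y\<close>, where no single member of \<open>{P, Q}\<close> contains both; so they never
  share a member of the \<open>n\<close>-th join.\<close>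
lemma two_pow_le_card_subcover:
  assumes visits: "\<forall>w. \<exists>z\<in>X. \<forall>j. (f ^^ (j * L)) z \<in> ball (if w j then y else x) \<epsilon>"
    and "P \<inter> ball x \<epsilon> = {}" "Q \<inter> ball y \<epsilon> = {}" "L > 0" "k * L \<le> n"
    and W: "W \<subseteq> join_cover f X {P, Q} n" "finite W" "X \<subseteq> \<Union>W"
  shows "2 ^ k \<le> card W"
proof -
  have "\<forall>S. \<exists>z. z \<in> X \<and> (\<forall>j. (f ^^ (j * L)) z \<in> ball (if j \<in> S then y else x) \<epsilon>)"
  proof
    fix S :: "nat set"
    show "\<exists>z. z \<in> X \<and> (\<forall>j. (f ^^ (j * L)) z \<in> ball (if j \<in> S then y else x) \<epsilon>)"
      using visits[rule_format, of "\<lambda>j. j \<in> S"] by blast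
  qed
  from choice[OF this] obtain z where
    z: "\<And>S. z S \<in> X" "\<And>S j. (f ^^ (j * L)) (z S) \<in> ball (if j \<in> S then y else x) \<epsilon>"
    by blast
  define E where "E S = (SOME E. E \<in> W \<and> z S \<in> E)" for S
  have E: "E S \<in> W \<and> z S \<in> E S" for S
  proof -
    obtain E0 where "E0 \<in> W \<and> z S \<in> E0" using W(3) z(1) by blast
    then show ?thesis unfolding E_def by (rule someI)
  qed
  have distinct: "E S \<noteq> E T" if "j \<in> S" "j \<notin> T" "j < k" for S T j
  proof
    assume "E S = E T"
    then have zT: "z T \<in> E S" using E[of T] by simp
    have ES: "E S \<in> join_cover f X {P, Q} n" using E[of S] W(1) by blast
    have "j * L < n" using \<open>j < k\<close> \<open>k * L \<le> n\<close> \<open>L > 0\<close> by (meson less_le_trans mult_less_mono1)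
    from join_cover_mem_common[OF ES conjunct2[OF E[of S]] zT this]
    show False using z(2)[of j S] z(2)[of j T] that assms(2,3) by auto
  qed
  have "inj_on E (Pow {..<k})"
  proof (rule inj_onI, rule ccontr)
    fix S T assume "S \<in> Pow {..<k}" "T \<in> Pow {..<k}" "E S = E T" "S \<noteq> T"
    then obtain j where "j < k" "j \<in> S \<and> j \<notin> T \<or> j \<in> T \<and> j \<notin> S" by blast
    then show False using distinct \<open>E S = E T\<close> by metis
  qed
  then have "card (Pow {..<k}) \<le> card W"
    using E W(2) by (intro card_inj_on_le) auto
  then show ?thesis by (simp add: card_Pow)
qed

lemma ln2_div_le_cover_entropy:
  assumes "f ` X \<subseteq> X" "X \<noteq> {}" "L > 0"
    and visits: "\<forall>w. \<exists>z\<in>X. \<forall>j. (f ^^ (j * L)) z \<in> ball (if w j then y else x) \<epsilon>"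
    and disj: "P \<inter> ball x \<epsilon> = {}" "Q \<inter> ball y \<epsilon> = {}" and cov: "X \<subseteq> P \<union> Q"
  shows "ln 2 / real L \<le> cover_entropy f X {P, Q}"
proof -
  define N where "N n = real (cover_num X (join_cover f X {P, Q} n))" for n
  have "(\<lambda>n. ln (N n) / real n) \<longlonglongrightarrow> cover_entropy f X {P, Q}"
    unfolding N_def using cov by (intro cover_entropy_tendsto[OF assms(1) _ _ assms(2)]) auto
  moreover have "strict_mono (\<lambda>k. k * L)" using \<open>L > 0\<close> by (intro strict_monoI) simp
  ultimately have "(\<lambda>k. ln (N (k * L)) / real (k * L)) \<longlonglongrightarrow> cover_entropy f X {P, Q}"
    using LIMSEQ_subseq_LIMSEQ unfolding comp_def by fastforce
  moreover have "ln 2 / real L \<le> ln (N (k * L)) / real (k * L)" if "k \<ge> 1" for k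
  proof -
    let ?J = "join_cover f X {P, Q} (k * L)"
    have "finite ?J" by (rule finite_join_cover) simp
    moreover have "X \<subseteq> \<Union>?J" using cov by (intro join_cover_covers[OF assms(1)]) auto
    ultimately obtain W where W: "W \<subseteq> ?J" "finite W" "card W = cover_num X ?J" "X \<subseteq> \<Union>W"
      by (rule obtain_minimal_subcover)
    have "2 ^ k \<le> cover_num X ?J"
      using two_pow_le_card_subcover[OF visits disj \<open>L > 0\<close> order_refl W(1,2,4)] W(3) by simp
    then have "2 ^ k \<le> N (k * L)" unfolding N_def by (metis of_nat_le_iff of_nat_numeral of_nat_power)
    then have "ln (2 ^ k) \<le> ln (N (k * L))" by (rule ln_mono) simp
    then have "real k * ln 2 \<le> ln (N (k * L))" by (simp add: ln_realpow)
    have "ln 2 / real L = real k * ln 2 / real (k * L)" using \<open>k \<ge> 1\<close> by simp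
    also have "\<dots> \<le> ln (N (k * L)) / real (k * L)"
      using \<open>real k * ln 2 \<le> ln (N (k * L))\<close> by (rule divide_right_mono) simp
    finally show ?thesis .
  qed
  ultimately show ?thesis by (intro LIMSEQ_le_const) auto
qed

lemma cover_entropy_pos_if_separated:
  assumes "f ` X \<subseteq> X" "has_shadowing f (chain_recurrent_set f X)" "chain_equiv f X x y" "\<epsilon> > 0"
    and "P \<inter> ball x \<epsilon> = {}" "Q \<inter> ball y \<epsilon> = {}" "X \<subseteq> P \<union> Q"
  shows "\<exists>a::nat. a > 0 \<and> ln 2 / real a \<le> cover_entropy f X {P, Q} \<and> cover_entropy f X {P, Q} > 0"
proof -
  have "x \<in> X" using assms(3) unfolding chain_equiv_def chain_recurrent_set_def by blast
  obtain L where "L > 0" and visits: "\<forall>w. \<exists>z\<in>X. \<forall>j. (f ^^ (j * L)) z \<in> ball (if w j then y else x) \<epsilon>"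
    by (rule shadowing_orbit_follows_word[OF assms(2-4)])
  have "ln 2 / real L \<le> cover_entropy f X {P, Q}"
    using ln2_div_le_cover_entropy[OF assms(1) _ \<open>L > 0\<close> visits assms(5-7)] \<open>x \<in> X\<close> by blast
  moreover have "ln 2 / real L > 0" using \<open>L > 0\<close> by simp
  ultimately have "cover_entropy f X {P, Q} > 0" by linarith
  with \<open>ln 2 / real L \<le> cover_entropy f X {P, Q}\<close> \<open>L > 0\<close> show ?thesis by blast
qed

lemma entropy_pair_if_separating_covers_have_entropy:
  assumes "x \<in> X" "y \<in> X" "x \<noteq> y"
    and pos: "\<And>\<epsilon> P Q. \<epsilon> > 0 \<Longrightarrow> P \<inter> ball x \<epsilon> = {} \<Longrightarrow> Q \<inter> ball y \<epsilon> = {} \<Longrightarrow> X \<subseteq> P \<union> Q \<Longrightarrow>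
      cover_entropy f X {P, Q} > 0"
  shows "entropy_pair f X x y"
proof -
  have "cover_entropy f X {X - A, X - B} > 0"
    if "A \<inter> B = {}" "open U" "x \<in> U" "U \<inter> X \<subseteq> A" "open V" "y \<in> V" "V \<inter> X \<subseteq> B" for A B U V
  proof -
    obtain e1 where "e1 > 0" "ball x e1 \<subseteq> U" using open_contains_ball_eq[OF \<open>open U\<close>] \<open>x \<in> U\<close> by blast
    obtain e2 where "e2 > 0" "ball y e2 \<subseteq> V" using open_contains_ball_eq[OF \<open>open V\<close>] \<open>y \<in> V\<close> by blast
    have "ball x (min e1 e2) \<subseteq> U" using \<open>ball x e1 \<subseteq> U\<close> by (meson min.cobounded1 order_trans subset_ball)
    moreover have "ball y (min e1 e2) \<subseteq> V" using \<open>ball y e2 \<subseteq> V\<close> by (meson min.cobounded2 order_trans subset_ball)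
    ultimately have "(X - A) \<inter> ball x (min e1 e2) = {}" "(X - B) \<inter> ball y (min e1 e2) = {}"
      using that by blast+
    moreover have "X \<subseteq> (X - A) \<union> (X - B)" using \<open>A \<inter> B = {}\<close> by blast
    moreover have "min e1 e2 > 0" using \<open>e1 > 0\<close> \<open>e2 > 0\<close> by simp
    ultimately show ?thesis using pos by blast
  qed
  then show ?thesis using assms(1-3) unfolding entropy_pair_def by blast
qed

theorem mainTheorem8:
  fixes f :: "'a::metric_space \<Rightarrow> 'a" and X :: "'a set" and x y :: 'a
  assumes "compact X" and "continuous_on X f" and "f ` X \<subseteq> X"
    and "has_shadowing f (chain_recurrent_set f X)"
    and "x \<in> chain_recurrent_set f X" and "y \<in> chain_recurrent_set f X"
    and "x \<noteq> y" and "chain_equiv f X x y"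
  shows "(\<forall>\<epsilon>. 0 < \<epsilon> \<and> \<epsilon> < dist x y / 2 \<longrightarrow>
           (\<exists>a::nat. a > 0 \<and>
              cover_entropy f X {X - ball x \<epsilon>, X - ball y \<epsilon>} \<ge> ln 2 / real a \<and>
              cover_entropy f X {X - ball x \<epsilon>, X - ball y \<epsilon>} > 0))
         \<and> entropy_pair f X x y"
proof (intro conjI allI impI)
  fix \<epsilon> :: real assume "0 < \<epsilon> \<and> \<epsilon> < dist x y / 2"
  then have "\<epsilon> > 0" "ball x \<epsilon> \<inter> ball y \<epsilon> = {}" by (simp_all add: disjoint_ballI)
  then show "\<exists>a::nat. a > 0 \<and> cover_entropy f X {X - ball x \<epsilon>, X - ball y \<epsilon>} \<ge> ln 2 / real a \<and>
      cover_entropy f X {X - ball x \<epsilon>, X - ball y \<epsilon>} > 0"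
    using cover_entropy_pos_if_separated[OF assms(3,4,8), of \<epsilon> "X - ball x \<epsilon>" "X - ball y \<epsilon>"] by auto
next
  have "x \<in> X" "y \<in> X" using assms(5,6) unfolding chain_recurrent_set_def by auto
  then show "entropy_pair f X x y"
    using assms(7) cover_entropy_pos_if_separated[OF assms(3,4,8)]
    by (intro entropy_pair_if_separating_covers_have_entropy) blast+
qed

end
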